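(* For $n\ge 1$, the number of shallow $231$-avoiding involutions in $S_n$ equals $2^{n-1}$ (in fact every $231$-avoiding involution is shallow).
   Context: For $\pi\in S_n$: $D(\pi)=\sum_{i}|\pi_i-i|$, $I(\pi)$ is the number of inversions, $T(\pi)=n-\mathrm{cyc}(\pi)$ with $\mathrm{cyc}$ the number of cycles in the disjoint cycle decomposition; $\pi$ is shallow if $I(\pi)+T(\pi)=D(\pi)$. A permutation avoids a pattern $\sigma$ if it has no subsequence order-isomorphic to $\sigma$. An involution is a permutation with $\pi=\pi^{-1}$. *)

theory Defs
  imports "HOL-Combinatorics.Permutations"
begin

text \<open>Permutations of S_n are modelled as functions nat => nat that permute {1..n}.\<close>

definition displacement :: "nat \<Rightarrow> (nat \<Rightarrow> nat) \<Rightarrow> int" where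
  "displacement n p = (\<Sum>i\<in>{1..n}. \<bar>int (p i) - int i\<bar>)"

definition inversions :: "nat \<Rightarrow> (nat \<Rightarrow> nat) \<Rightarrow> nat" where
  "inversions n p = card {(i, j). i \<in> {1..n} \<and> j \<in> {1..n} \<and> i < j \<and> p i > p j}"

definition cycle_of :: "(nat \<Rightarrow> nat) \<Rightarrow> nat \<Rightarrow> nat set" where
  "cycle_of p i = {(p ^^ k) i | k. True}"

definition num_cycles :: "nat \<Rightarrow> (nat \<Rightarrow> nat) \<Rightarrow> nat" where
  "num_cycles n p = card (cycle_of p ` {1..n})"

definition reflection_length :: "nat \<Rightarrow> (nat \<Rightarrow> nat) \<Rightarrow> nat" where
  "reflection_length n p = n - num_cycles n p"

definition shallow :: "nat \<Rightarrow> (nat \<Rightarrow> nat) \<Rightarrow> bool" where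
  "shallow n p \<longleftrightarrow>
     int (inversions n p) + int (reflection_length n p) = displacement n p"

definition avoids_231 :: "nat \<Rightarrow> (nat \<Rightarrow> nat) \<Rightarrow> bool" where
  "avoids_231 n p \<longleftrightarrow>
     \<not> (\<exists>i j k. 1 \<le> i \<and> i < j \<and> j < k \<and> k \<le> n \<and> p k < p i \<and> p i < p j)"

definition involution :: "nat \<Rightarrow> (nat \<Rightarrow> nat) \<Rightarrow> bool" where
  "involution n p \<longleftrightarrow> p permutes {1..n} \<and> (\<forall>i. p (p i) = i)"

end

theory Submission
  imports Defs
begin

text \<open>
  Let \<open>p\<close> be a 231-avoiding involution of \<open>{1..n}\<close> with \<open>p n = a + 1\<close>. Every entry left of
  position \<open>a + 1\<close> is below \<open>a + 1\<close>, and, because \<open>p = p\<^sup>-\<^sup>1\<close>, an ascent among positions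
  \<open>a + 1, \<dots>, n\<close> would also yield a 231. So \<open>p\<close> is a 231-avoiding involution of \<open>{1..a}\<close>
  followed by the reversal of the block \<open>{a+1..n}\<close>, and every such concatenation qualifies.
  Hence the numbers \<open>c\<^sub>n\<close> of these involutions satisfy \<open>c\<^sub>n = c\<^sub>0 + \<dots> + c\<^sub>n\<^sub>-\<^sub>1\<close>, so \<open>c\<^sub>n = 2\<^sup>n\<^sup>-\<^sup>1\<close>.
  Appending a reversed block of length \<open>m\<close> adds \<open>m choose 2\<close> inversions, \<open>m div 2\<close> to the
  reflection length and \<open>m\<^sup>2 div 2\<close> to the displacement; as \<open>m choose 2 + m div 2 = m\<^sup>2 div 2\<close>,
  shallowness is preserved, and by induction every 231-avoiding involution is shallow.
\<close>

lemma involution_permutesI: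
  assumes "\<And>i. p (p i) = i" "\<And>i. i \<notin> A \<Longrightarrow> p i = i"
  shows "p permutes A"
  unfolding permutes_def using assms by metis

lemma funpow_involution:
  assumes "\<And>i. p (p i) = i"
  shows "(p ^^ k) i = (if even k then i else p i)"
  by (induction k) (auto simp: assms)

lemma cycle_of_involution:
  assumes "\<And>i. p (p i) = i"
  shows "cycle_of p i = {i, p i}"
proof -
  have "(p ^^ k) i \<in> cycle_of p i" for k unfolding cycle_of_def by blast
  from this[of 0] this[of 1] have "{i, p i} \<subseteq> cycle_of p i" by simp
  moreover have "cycle_of p i \<subseteq> {i, p i}"
    unfolding cycle_of_def using funpow_involution[OF assms] by auto
  ultimately show ?thesis by blast
qed

text \<open>Each cycle \<open>{i, p i}\<close> is represented by its smaller element.\<close>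

lemma num_cycles_involution:
  assumes inv: "\<And>i. p (p i) = i" and perm: "p permutes {1..n}"
  shows "num_cycles n p = card {i\<in>{1..n}. i \<le> p i}"
proof -
  let ?B = "{i\<in>{1..n}. i \<le> p i}"
  have "cycle_of p ` {1..n} = (\<lambda>i. {i, p i}) ` ?B"
  proof (intro equalityI subsetI)
    fix X assume "X \<in> cycle_of p ` {1..n}"
    then obtain i where i: "i \<in> {1..n}" "X = {i, p i}"
      using cycle_of_involution[OF inv] by auto
    have "p i \<in> {1..n}" using perm i(1) by (meson permutes_in_image)
    then have "i \<in> ?B \<or> p i \<in> ?B" using i(1) inv[of i] by auto
    moreover have "X = {p i, p (p i)}" using i inv[of i] by auto
    ultimately show "X \<in> (\<lambda>i. {i, p i}) ` ?B" using i(2) by blast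
  qed (use cycle_of_involution[OF inv] in auto)
  moreover have "inj_on (\<lambda>i. {i, p i}) ?B"
    by (rule inj_onI) (auto simp: doubleton_eq_iff)
  ultimately show ?thesis unfolding num_cycles_def by (simp add: card_image)
qed

lemma sum_abs_reversal_offsets:
  "(\<Sum>j<m. \<bar>int m - 1 - 2 * int j\<bar>) = int (m * m div 2)"
proof (induction m rule: less_induct)
  case (less m)
  show ?case
  proof (cases "m < 2")
    case True
    then show ?thesis by (cases m) auto
  next
    case False
    then obtain k where m: "m = Suc (Suc k)" by (metis add_2_eq_Suc le_add_diff_inverse not_less)
    \<comment> \<open>peel off the first and the last summand; the middle ones are the sum for \<open>k\<close>\<close>
    have "(\<Sum>j<m. \<bar>int m - 1 - 2 * int j\<bar>)
          = int m - 1 + (\<Sum>j<Suc k. \<bar>int m - 1 - 2 * int (Suc j)\<bar>)"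
      unfolding m by (subst sum.lessThan_Suc_shift) simp
    also have "(\<Sum>j<Suc k. \<bar>int m - 1 - 2 * int (Suc j)\<bar>)
               = (\<Sum>j<k. \<bar>int k - 1 - 2 * int j\<bar>) + (int k + 1)"
      unfolding m by (simp add: algebra_simps)
    also have "(\<Sum>j<k. \<bar>int k - 1 - 2 * int j\<bar>) = int (k * k div 2)"
      using less.IH m by simp
    finally show ?thesis unfolding m by (simp add: algebra_simps)
  qed
qed

lemma card_increasing_pairs:
  "card {(i, j). a < i \<and> i < j \<and> j \<le> a + m} = m choose 2"
proof (induction m)
  case 0
  have "{(i, j). a < i \<and> i < j \<and> j \<le> a} = {}" by auto
  then have "card {(i, j). a < i \<and> i < j \<and> j \<le> a} = 0" by (simp only: card.empty)
  then show ?case by (simp add: choose_two)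
next
  case (Suc m)
  have split: "{(i, j). a < i \<and> i < j \<and> j \<le> a + Suc m}
      = {(i, j). a < i \<and> i < j \<and> j \<le> a + m} \<union> (\<lambda>i. (i, a + Suc m)) ` {a<..a+m}"
    by auto
  have "finite {(i, j). a < i \<and> i < j \<and> j \<le> a + m}"
    by (rule finite_subset[of _ "{..a+m} \<times> {..a+m}"]) auto
  then have "card {(i, j). a < i \<and> i < j \<and> j \<le> a + Suc m}
             = card {(i, j). a < i \<and> i < j \<and> j \<le> a + m} + m"
    unfolding split by (subst card_Un_disjoint) (auto simp: card_image inj_on_def)
  then show ?case using Suc by (simp add: numeral_2_eq_2 choose_one)
qed

lemma choose_two_plus_half: "(m choose 2) + m div 2 = m * m div 2"
proof -
  obtain t where "m = 2 * t \<or> m = 2 * t + 1" by (metis oddE evenE)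
  then show ?thesis
  proof
    assume m: "m = 2 * t"
    have "m * (m - 1) = 2 * (t * (2 * t - 1))" "m * m = 2 * (2 * t * t)" unfolding m by simp_all
    then show ?thesis unfolding choose_two using m by (cases t) simp_all
  next
    assume m: "m = 2 * t + 1"
    have "m * (m - 1) = 2 * (t * (2 * t + 1))" "m * m = 2 * (2 * t * t + 2 * t) + 1"
      unfolding m by (simp_all add: algebra_simps)
    then show ?thesis unfolding choose_two using m by simp
  qed
qed

definition involutions_231 :: "nat \<Rightarrow> (nat \<Rightarrow> nat) set" where
  "involutions_231 n = {p. p permutes {1..n} \<and> involution n p \<and> avoids_231 n p}"

lemma avoids_231D:
  assumes "avoids_231 n p" "1 \<le> i" "i < j" "j < k" "k \<le> n" "p k < p i" "p i < p j"
  shows False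
  using assms unfolding avoids_231_def by blast

lemma involutions_231D:
  assumes "p \<in> involutions_231 n"
  shows involutions_231_inv: "p (p i) = i"
    and involutions_231_permutes: "p permutes {1..n}"
    and involutions_231_avoids: "avoids_231 n p"
    and involutions_231_le: "i \<le> n \<Longrightarrow> p i \<le> n"
    and involutions_231_fixed: "i = 0 \<or> n < i \<Longrightarrow> p i = i"
proof -
  show perm: "p permutes {1..n}" and "p (p i) = i" "avoids_231 n p"
    using assms unfolding involutions_231_def involution_def by auto
  show "i = 0 \<or> n < i \<Longrightarrow> p i = i" using perm by (auto intro: permutes_not_in)
  show "i \<le> n \<Longrightarrow> p i \<le> n"
    using perm permutes_in_image[OF perm, of i] by (cases "i = 0") (auto simp: permutes_not_in)
qed

lemma involutions_231_0: "involutions_231 0 = {id}"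
  by (auto simp: involutions_231_def involution_def avoids_231_def permutes_empty)

lemma finite_involutions_231: "finite (involutions_231 n)"
  by (rule finite_subset[of _ "{p. p permutes {1..n}}"])
    (auto simp: involutions_231_def finite_permutations)

subsection \<open>Appending a reversed block\<close>

definition append_reversal :: "nat \<Rightarrow> nat \<Rightarrow> (nat \<Rightarrow> nat) \<Rightarrow> nat \<Rightarrow> nat" where
  "append_reversal a m q i = (if i \<le> a then q i else if i \<le> a + m then 2 * a + m + 1 - i else i)"

lemma append_reversal_low: "i \<le> a \<Longrightarrow> append_reversal a m q i = q i"
  and append_reversal_block: "a < i \<Longrightarrow> i \<le> a + m \<Longrightarrow> append_reversal a m q i = 2 * a + m + 1 - i"
  by (simp_all add: append_reversal_def)

lemma append_reversal_in_involutions_231: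
  assumes q: "q \<in> involutions_231 a"
  shows "append_reversal a m q \<in> involutions_231 (a + m)"
proof -
  let ?e = "append_reversal a m q"
  have inv: "?e (?e i) = i" for i
    using involutions_231_inv[OF q, of i] involutions_231_le[OF q, of i]
    by (auto simp: append_reversal_def)
  have "?e permutes {1..a+m}"
    by (rule involution_permutesI[OF inv])
      (auto simp: append_reversal_def involutions_231_fixed[OF q])
  moreover have "avoids_231 (a + m) ?e"
    unfolding avoids_231_def
  proof (intro notI, elim exE conjE)
    fix i j l assume h: "1 \<le> i" "i < j" "j < l" "l \<le> a + m" "?e l < ?e i" "?e i < ?e j"
    show False
    proof (cases "l \<le> a")
      case True
      then show False
        using h involutions_231_avoids[OF q] by (auto simp: avoids_231_def append_reversal_low)
    next
      case False
      \<comment> \<open>\<open>?e l\<close> lies in the block, so \<open>?e i\<close> does too; inside the block \<open>?e\<close> is decreasing\<close>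
      then have "a < ?e i" using h by (simp add: append_reversal_def)
      then have "a < i"
        using involutions_231_le[OF q, of i] by (auto simp: append_reversal_def split: if_splits)
      then show False using h by (simp add: append_reversal_block)
    qed
  qed
  ultimately show ?thesis using inv unfolding involutions_231_def involution_def by auto
qed

subsection \<open>Decomposition of a 231-avoiding involution\<close>

lemma involutions_231_below_last:
  assumes p: "p \<in> involutions_231 n" and i: "i < p n"
  shows "p i < p n"
proof (rule ccontr)
  assume "\<not> p i < p n"
  have "p n \<le> n" using involutions_231_le[OF p] by simp
  have "i \<noteq> 0" using \<open>\<not> p i < p n\<close> involutions_231_fixed[OF p, of 0] i by (cases i) auto
  have "p i \<noteq> p n"
    using i \<open>p n \<le> n\<close> involutions_231_inv[OF p, of i] involutions_231_inv[OF p, of n] by (metis leD)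
  with \<open>\<not> p i < p n\<close> have "p n < p i" by simp
  moreover have "p i < n"
  proof -
    have "p i \<noteq> n" using i involutions_231_inv[OF p, of i] by auto
    moreover have "p i \<le> n" using involutions_231_le[OF p, of i] i \<open>p n \<le> n\<close> by simp
    ultimately show ?thesis by simp
  qed
  moreover have "p (p n) = n" by (rule involutions_231_inv[OF p])
  \<comment> \<open>positions \<open>i < p n < n\<close> carry the pattern \<open>p i, n, p n\<close>\<close>
  ultimately show False
    using avoids_231D[OF involutions_231_avoids[OF p], of i "p n" n] \<open>i \<noteq> 0\<close> i by simp
qed

lemma involutions_231_tail_decreasing:
  assumes p: "p \<in> involutions_231 n" and i: "p n \<le> i" "i < n"
  shows "p (Suc i) < p i"
proof (rule ccontr)
  assume "\<not> p (Suc i) < p i"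
  moreover have "p (Suc i) \<noteq> p i"
    using involutions_231_inv[OF p, of i] involutions_231_inv[OF p, of "Suc i"] by (metis n_not_Suc_n)
  ultimately have lt: "p i < p (Suc i)" by simp
  have "p (Suc i) \<noteq> n" using involutions_231_inv[OF p, of "Suc i"] i by auto
  then have "p (Suc i) < n" using involutions_231_le[OF p, of "Suc i"] i by simp
  have "i \<noteq> p n" using lt \<open>p (Suc i) < n\<close> involutions_231_inv[OF p, of n] by auto
  then have "p n < i" using i by simp
  have "p i \<noteq> 0"
    using involutions_231_inv[OF p, of i] involutions_231_fixed[OF p, of 0] \<open>p n < i\<close>
    by (metis not_less0)
  \<comment> \<open>positions \<open>p i < p (Suc i) < n\<close> carry the pattern \<open>i, Suc i, p n\<close>\<close>
  then show False
    using avoids_231D[OF involutions_231_avoids[OF p], of "p i" "p (Suc i)" n]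
      lt \<open>p (Suc i) < n\<close> \<open>p n < i\<close>
      involutions_231_inv[OF p, of i] involutions_231_inv[OF p, of "Suc i"]
    by simp
qed

lemma involutions_231_tail:
  assumes p: "p \<in> involutions_231 n" and i: "p n \<le> i" "i \<le> n"
  shows "p i = n + p n - i"
proof -
  have upper: "p (p n + t) \<le> n - t" if "p n + t \<le> n" for t
    using that
  proof (induction t)
    case 0
    then show ?case using involutions_231_inv[OF p, of n] by simp
  next
    case (Suc t)
    then show ?case using involutions_231_tail_decreasing[OF p, of "p n + t"] by simp
  qed
  have lower: "p n + t \<le> p (n - t)" if "p n + t \<le> n" for t
    using that
  proof (induction t)
    case 0
    then show ?case by simp
  next
    case (Suc t)
    then have "p (n - t) < p (n - Suc t)"
      using involutions_231_tail_decreasing[OF p, of "n - Suc t"] by (simp add: Suc_diff_Suc)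
    then show ?case using Suc by simp
  qed
  have "p n + (n - i) \<le> p (n - (n - i))" by (rule lower) (use i in simp)
  then show ?thesis using upper[of "i - p n"] i by simp
qed

lemma involutions_231_decompose:
  assumes p: "p \<in> involutions_231 n" and n: "1 \<le> n"
  obtains a q where "a < n" "q \<in> involutions_231 a" "p = append_reversal a (n - a) q"
proof
  define a where "a = p n - 1"
  define q where "q i = (if i \<le> a then p i else i)" for i
  have "p n \<noteq> 0"
    using involutions_231_inv[OF p, of n] involutions_231_fixed[OF p, of 0] n by (metis not_one_le_zero)
  then have pn: "p n = Suc a" unfolding a_def by simp
  show "a < n" using involutions_231_le[OF p, of n] pn by simp
  have q_le: "q i \<le> a" if "i \<le> a" for i
    using involutions_231_below_last[OF p, of i] that pn unfolding q_def by simp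
  have q_inv: "q (q i) = i" for i
    using q_le[of i] involutions_231_inv[OF p, of i] unfolding q_def by (auto split: if_splits)
  have "q permutes {1..a}"
    by (rule involution_permutesI[OF q_inv]) (auto simp: q_def involutions_231_fixed[OF p])
  moreover have "avoids_231 a q"
    unfolding avoids_231_def
  proof (intro notI, elim exE conjE)
    fix i j l assume "1 \<le> i" "i < j" "j < l" "l \<le> a" "q l < q i" "q i < q j"
    then show False
      using avoids_231D[OF involutions_231_avoids[OF p], of i j l] \<open>a < n\<close> by (simp add: q_def)
  qed
  ultimately show "q \<in> involutions_231 a"
    using q_inv unfolding involutions_231_def involution_def by auto
  show "p = append_reversal a (n - a) q"
  proof
    fix i
    show "p i = append_reversal a (n - a) q i"
      using involutions_231_tail[OF p, of i] involutions_231_fixed[OF p, of i] pn \<open>a < n\<close>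
      unfolding append_reversal_def q_def by auto
  qed
qed

lemma involutions_231_eq_UN:
  assumes "1 \<le> n"
  shows "involutions_231 n = (\<Union>a<n. append_reversal a (n - a) ` involutions_231 a)"
proof (intro equalityI subsetI)
  fix p assume "p \<in> involutions_231 n"
  then obtain a q where "a < n" "q \<in> involutions_231 a" "p = append_reversal a (n - a) q"
    using assms by (rule involutions_231_decompose)
  then show "p \<in> (\<Union>a<n. append_reversal a (n - a) ` involutions_231 a)" by blast
next
  fix p assume "p \<in> (\<Union>a<n. append_reversal a (n - a) ` involutions_231 a)"
  then obtain a q where "a < n" "q \<in> involutions_231 a" "p = append_reversal a (n - a) q"
    by blast
  then show "p \<in> involutions_231 n" using append_reversal_in_involutions_231[of q a "n - a"] by simp
qed

lemma inj_on_append_reversal: "inj_on (append_reversal a m) (involutions_231 a)"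
proof (rule inj_onI, rule ext)
  fix q r i
  assume q: "q \<in> involutions_231 a" and r: "r \<in> involutions_231 a"
    and eq: "append_reversal a m q = append_reversal a m r"
  have "append_reversal a m q i = append_reversal a m r i" using eq by simp
  then show "q i = r i"
    using involutions_231_fixed[OF q, of i] involutions_231_fixed[OF r, of i]
    by (cases "i \<le> a") (auto simp: append_reversal_low)
qed

lemma card_involutions_231_rec:
  assumes "1 \<le> n"
  shows "card (involutions_231 n) = (\<Sum>a<n. card (involutions_231 a))"
proof -
  have disjoint: "append_reversal a (n - a) ` involutions_231 a
      \<inter> append_reversal b (n - b) ` involutions_231 b = {}" if "a < n" "b < n" "a \<noteq> b" for a b
  proof -
    have "append_reversal c (n - c) q n = Suc c" if "c < n" for c q
      using that by (simp add: append_reversal_def)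
    then show ?thesis using that by (auto dest: fun_cong[of _ _ n])
  qed
  have "card (involutions_231 n) = (\<Sum>a<n. card (append_reversal a (n - a) ` involutions_231 a))"
    unfolding involutions_231_eq_UN[OF assms]
    by (rule card_UN_disjoint) (auto simp: finite_involutions_231 disjoint)
  also have "\<dots> = (\<Sum>a<n. card (involutions_231 a))"
    by (simp add: card_image inj_on_append_reversal)
  finally show ?thesis .
qed

lemma card_involutions_231: "card (involutions_231 (Suc n)) = 2 ^ n"
proof (induction n)
  case 0
  show ?case using card_involutions_231_rec[of 1] by (simp add: involutions_231_0)
next
  case (Suc n)
  have "card (involutions_231 (Suc (Suc n))) = (\<Sum>a<Suc (Suc n). card (involutions_231 a))"
    by (rule card_involutions_231_rec) simp
  also have "\<dots> = (\<Sum>a<Suc n. card (involutions_231 a)) + card (involutions_231 (Suc n))"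
    by simp
  also have "(\<Sum>a<Suc n. card (involutions_231 a)) = card (involutions_231 (Suc n))"
    by (rule card_involutions_231_rec[symmetric]) simp
  finally show ?case using Suc.IH by simp
qed

subsection \<open>Shallowness\<close>

lemma num_cycles_append_reversal:
  assumes q: "q \<in> involutions_231 a"
  shows "num_cycles (a + m) (append_reversal a m q) = num_cycles a q + (m + 1) div 2"
proof -
  let ?e = "append_reversal a m q"
  have e: "?e \<in> involutions_231 (a + m)" using q by (rule append_reversal_in_involutions_231)
  have "{i\<in>{1..a+m}. i \<le> ?e i} = {i\<in>{1..a}. i \<le> q i} \<union> {a+1..a + (m + 1) div 2}"
    by (auto simp: append_reversal_def)
  moreover have "card ({i\<in>{1..a}. i \<le> q i} \<union> {a+1..a + (m + 1) div 2})
                 = card {i\<in>{1..a}. i \<le> q i} + (m + 1) div 2"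
    by (subst card_Un_disjoint) auto
  ultimately show ?thesis
    using num_cycles_involution[OF involutions_231_inv[OF q] involutions_231_permutes[OF q]]
      num_cycles_involution[OF involutions_231_inv[OF e] involutions_231_permutes[OF e]]
    by simp
qed

lemma reflection_length_append_reversal:
  assumes q: "q \<in> involutions_231 a"
  shows "reflection_length (a + m) (append_reversal a m q) = reflection_length a q + m div 2"
proof -
  have "card {i\<in>{1..a}. i \<le> q i} \<le> card {1..a}" by (rule card_mono) auto
  then have "num_cycles a q \<le> a"
    using num_cycles_involution[OF involutions_231_inv[OF q] involutions_231_permutes[OF q]] by simp
  then show ?thesis
    unfolding reflection_length_def num_cycles_append_reversal[OF q] by simp
qed

lemma inversions_append_reversal:
  assumes q: "q \<in> involutions_231 a"
  shows "inversions (a + m) (append_reversal a m q) = inversions a q + (m choose 2)"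
proof -
  let ?e = "append_reversal a m q"
  let ?I = "{(i, j). i \<in> {1..a} \<and> j \<in> {1..a} \<and> i < j \<and> q i > q j}"
  let ?P = "{(i, j). a < i \<and> i < j \<and> j \<le> a + m}"
  \<comment> \<open>no inversion straddles position \<open>a\<close>, since \<open>q\<close> maps \<open>{1..a}\<close> below the block\<close>
  have "{(i, j). i \<in> {1..a+m} \<and> j \<in> {1..a+m} \<and> i < j \<and> ?e i > ?e j} = ?I \<union> ?P"
  proof (rule set_eqI, clarify)
    fix i j
    show "(i, j) \<in> {(i, j). i \<in> {1..a+m} \<and> j \<in> {1..a+m} \<and> i < j \<and> ?e i > ?e j}
          \<longleftrightarrow> (i, j) \<in> ?I \<union> ?P"
    proof (cases "j \<le> a")
      case True
      then show ?thesis by (auto simp: append_reversal_low)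
    next
      case False
      then show ?thesis using involutions_231_le[OF q, of i] by (auto simp: append_reversal_def)
    qed
  qed
  moreover have "finite ?I" by (rule finite_subset[of _ "{1..a} \<times> {1..a}"]) auto
  moreover have "finite ?P" by (rule finite_subset[of _ "{..a+m} \<times> {..a+m}"]) auto
  moreover have "?I \<inter> ?P = {}" by auto
  ultimately show ?thesis
    unfolding inversions_def by (simp add: card_Un_disjoint card_increasing_pairs)
qed

lemma displacement_append_reversal:
  "displacement (a + m) (append_reversal a m q) = displacement a q + int (m * m div 2)"
proof -
  let ?e = "append_reversal a m q"
  have block: "{a+1..a+m} = (\<lambda>j. a + 1 + j) ` {..<m}"
  proof (rule set_eqI)
    fix x
    show "x \<in> {a+1..a+m} \<longleftrightarrow> x \<in> (\<lambda>j. a + 1 + j) ` {..<m}"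
      by (auto simp: image_iff intro!: bexI[of _ "x - a - 1"])
  qed
  have "(\<Sum>i\<in>{a+1..a+m}. \<bar>int (?e i) - int i\<bar>) = (\<Sum>j<m. \<bar>int (?e (a + 1 + j)) - int (a + 1 + j)\<bar>)"
    unfolding block by (subst sum.reindex) (auto simp: inj_on_def)
  also have "\<dots> = (\<Sum>j<m. \<bar>int m - 1 - 2 * int j\<bar>)"
    by (rule sum.cong) (auto simp: append_reversal_block of_nat_diff)
  also have "\<dots> = int (m * m div 2)" by (rule sum_abs_reversal_offsets)
  finally have "(\<Sum>i\<in>{a+1..a+m}. \<bar>int (?e i) - int i\<bar>) = int (m * m div 2)" .
  moreover have "(\<Sum>i\<in>{1..a}. \<bar>int (?e i) - int i\<bar>) = displacement a q"
    unfolding displacement_def by (simp add: append_reversal_low)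
  moreover have "{1..a+m} = {1..a} \<union> {a+1..a+m}" by auto
  ultimately show ?thesis
    unfolding displacement_def by (simp add: sum.union_disjoint)
qed

lemma shallow_append_reversal:
  assumes q: "q \<in> involutions_231 a" and "shallow a q"
  shows "shallow (a + m) (append_reversal a m q)"
  using assms(2) choose_two_plus_half[of m]
  unfolding shallow_def inversions_append_reversal[OF q] reflection_length_append_reversal[OF q]
    displacement_append_reversal
  by linarith

lemma involutions_231_shallow: "p \<in> involutions_231 n \<Longrightarrow> shallow n p"
proof (induction n arbitrary: p rule: less_induct)
  case (less n)
  show ?case
  proof (cases "n = 0")
    case True
    then have "p = id" using less.prems by (simp add: involutions_231_0)
    then show ?thesis
      using True by (simp add: shallow_def inversions_def reflection_length_def displacement_def)
  next
    case False
    then obtain a q where "a < n" "q \<in> involutions_231 a" "p = append_reversal a (n - a) q"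
      using less.prems by (metis involutions_231_decompose less_one not_le)
    then show ?thesis
      using shallow_append_reversal[of q a "n - a"] less.IH[of a q] by simp
  qed
qed

theorem theorem4p6:
  fixes n :: nat
  assumes "n \<ge> 1"
  shows "card {p. p permutes {1..n} \<and> involution n p \<and> avoids_231 n p \<and> shallow n p}
           = 2 ^ (n - 1)
       \<and> (\<forall>p. p permutes {1..n} \<and> involution n p \<and> avoids_231 n p \<longrightarrow> shallow n p)"
proof
  show "\<forall>p. p permutes {1..n} \<and> involution n p \<and> avoids_231 n p \<longrightarrow> shallow n p"
    using involutions_231_shallow unfolding involutions_231_def by blast
  then have "{p. p permutes {1..n} \<and> involution n p \<and> avoids_231 n p \<and> shallow n p}
             = involutions_231 (Suc (n - 1))"
    using assms unfolding involutions_231_def by auto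
  then show "card {p. p permutes {1..n} \<and> involution n p \<and> avoids_231 n p \<and> shallow n p}
             = 2 ^ (n - 1)"
    by (simp only: card_involutions_231)
qed

end
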